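(* In the IM-OCP setting described in the context, with $r_1\in[0,B]$ and any non-increasing sequence of positive step sizes $(\eta_t)_{t\ge1}$, for every $T\ge1$, $$\overline{\mathrm{Reg}}(T):=\mathbb{E}\left[\sum_{i=1}^T\ell_{1-\alpha}(r_i,r_i^* )\frac{\mathrm{obs}_i}{p_i}\right]-\min_{u\in\mathbb{R}}\sum_{i=1}^T\ell_{1-\alpha}(u,r_i^* )\le\frac{\mathbb{E}[D_T]}{\eta_T}+\frac{1}{2\mu\,p_{\min}}\sum_{i=1}^T\eta_i,$$ where $p_{\min}=\min_{t\in\{1,\dots,T\}}p_t$, $D_T=\max_{t\in\{1,\dots,T\}}\mathcal{B}_R\big(q_\alpha(r^*_{1:T}),r_t\big)$, and expectations are over the feedback indicators $(\mathrm{obs}_t)$.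
   Context: Fix $\alpha\in(0,1)$ and $B>0$. Let $(r_t^* )_{t\ge1}$ be an arbitrary deterministic sequence of scores with $r_t^*\in[0,B]$. Given thresholds $r_t$, the miscoverage indicator is $E_t=\mathbb{1}\{r_t^*>r_t\}$. The quantile loss is $\ell_{1-\alpha}(r,r^* )=(\alpha-\mathbb{1}\{r<r^*\})(r-r^* )$, and $q_\alpha(r^*_{1:T})$ denotes a minimizer over $u\in\mathbb{R}$ of $\sum_{t=1}^T\ell_{1-\alpha}(u,r_t^* )$. Let $P$ be a probability distribution on $[0,B]$ with bounded density, $\sigma>0$, and $R(r)=\mathbb{E}_{r^*\sim P}[\ell_{1-\alpha}(r,r^* )]+\frac{\sigma}{2}r^2$; $R$ is differentiable and $\nabla R$ is a continuous strictly increasing bijection of $\mathbb{R}$. Let $\mu>0$ be a constant such that $R$ is $\mu$-strongly convex (e.g. $\mu=\sigma$). The Bregman divergence of $R$ is $\mathcal{B}_R(u,v)=R(u)-R(v)-\nabla R(v)(u-v)$. Feedback: $p_t\in(0,1]$ and $(\mathrm{obs}_t)_{t\ge1}$ are independent Bernoulli random variables with $\Pr(\mathrm{obs}_t=1)=p_t$. IM-OCP: given $r_1$ and step sizes $\eta_t>0$, for $t\ge2$ the threshold $r_t$ is defined by $$\nabla R(r_t)=\nabla R(r_{t-1})-\eta_{t-1}(\alpha-E_{t-1})\frac{\mathrm{obs}_{t-1}}{p_{t-1}}.$$ *)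

theory Defs
  imports "HOL-Analysis.Analysis" "HOL-Probability.Probability"
begin

definition qloss :: "real \<Rightarrow> real \<Rightarrow> real \<Rightarrow> real" where
  "qloss \<alpha> r rs = (\<alpha> - (if r < rs then 1 else 0)) * (r - rs)"

definition Rreg :: "real \<Rightarrow> real \<Rightarrow> (real \<Rightarrow> real) \<Rightarrow> real \<Rightarrow> real" where
  "Rreg \<alpha> \<sigma> f r = (\<integral>x. f x * qloss \<alpha> r x \<partial>lborel) + \<sigma> / 2 * r\<^sup>2"

definition strongly_convex :: "real \<Rightarrow> (real \<Rightarrow> real) \<Rightarrow> bool" where
  "strongly_convex \<mu> F \<longleftrightarrow> (\<forall>x y t. 0 \<le> t \<and> t \<le> 1 \<longrightarrow>
     F (t * x + (1 - t) * y) \<le> t * F x + (1 - t) * F y - \<mu> / 2 * t * (1 - t) * (x - y)\<^sup>2)"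

definition bregman :: "(real \<Rightarrow> real) \<Rightarrow> (real \<Rightarrow> real) \<Rightarrow> real \<Rightarrow> real \<Rightarrow> real" where
  "bregman F dF u v = F u - F v - dF v * (u - v)"

text \<open>IM-OCP thresholds r_t (t \<ge> 1; index 0 is a dummy copy of r_1) as a function of the
  feedback realisation obs.\<close>
fun imocp :: "(real \<Rightarrow> real) \<Rightarrow> real \<Rightarrow> (nat \<Rightarrow> real) \<Rightarrow> (nat \<Rightarrow> real) \<Rightarrow> (nat \<Rightarrow> real)
              \<Rightarrow> real \<Rightarrow> (nat \<Rightarrow> bool) \<Rightarrow> nat \<Rightarrow> real" where
  "imocp dF \<alpha> \<eta> p rs r1 obs 0 = r1"
| "imocp dF \<alpha> \<eta> p rs r1 obs (Suc 0) = r1"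
| "imocp dF \<alpha> \<eta> p rs r1 obs (Suc (Suc n)) =
     (let r = imocp dF \<alpha> \<eta> p rs r1 obs (Suc n);
          E = (if rs (Suc n) > r then 1 else 0)
      in inv dF (dF r - \<eta> (Suc n) * (\<alpha> - E) * (if obs (Suc n) then 1 else 0) / p (Suc n)))"

end

theory Submission
  imports Defs
begin

text \<open>Along every feedback path, IM-OCP is mirror descent with mirror map \<open>R\<close> on the
  importance-weighted subgradients \<open>g\<^sub>t = (\<alpha> - E\<^sub>t) obs\<^sub>t / p\<^sub>t\<close> of the quantile loss.
  The standard one-step estimate, whose quadratic remainder is controlled by
  \<open>\<mu>\<close>-strong convexity, telescopes over the non-increasing steps into
  \<open>D\<^sub>T / \<eta>\<^sub>T + \<Sum> \<eta>\<^sub>t g\<^sub>t\<^sup>2 / (2\<mu>)\<close>. Taking expectations, the importance weights are unbiased,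
  so the comparator term becomes the optimal empirical loss, and
  \<open>E[g\<^sub>t\<^sup>2] \<le> 1 / p\<^sub>t \<le> 1 / p\<^sub>m\<^sub>i\<^sub>n\<close>.\<close>

lemma strongly_convex_first_order:
  fixes F dF :: "real \<Rightarrow> real"
  assumes sc: "strongly_convex \<mu> F"
    and deriv: "\<And>x. (F has_real_derivative dF x) (at x)"
  shows "F v + dF v * (u - v) + \<mu> / 2 * (u - v)\<^sup>2 \<le> F u"
proof -
  define G where "G = (\<lambda>t. F (v + t * (u - v)))"
  have "(G has_real_derivative dF v * (u - v)) (at 0)"
    unfolding G_def using deriv[of v]
    by (auto intro!: derivative_eq_intros DERIV_chain2[where f = F])
  hence "((\<lambda>h. (G (0 + h) - G 0) / h) \<longlongrightarrow> dF v * (u - v)) (at 0)"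
    by (simp add: DERIV_def)
  hence slope: "((\<lambda>h. (G (0 + h) - G 0) / h) \<longlongrightarrow> dF v * (u - v)) (at_right 0)"
    by (rule tendsto_mono[rotated]) (simp add: at_le)
  have bound: "((\<lambda>t. F u - F v - \<mu> / 2 * (1 - t) * (u - v)\<^sup>2)
      \<longlongrightarrow> F u - F v - \<mu> / 2 * (1 - 0) * (u - v)\<^sup>2) (at_right 0)"
    by (intro tendsto_intros)
  have "eventually (\<lambda>t. (G (0 + t) - G 0) / t \<le> F u - F v - \<mu> / 2 * (1 - t) * (u - v)\<^sup>2)
      (at_right 0)"
    unfolding eventually_at_right_field
  proof (intro exI[of _ 1] conjI allI impI)
    fix t :: real assume t: "0 < t" "t < 1"
    have "F (t * u + (1 - t) * v) \<le> t * F u + (1 - t) * F v - \<mu> / 2 * t * (1 - t) * (u - v)\<^sup>2"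
      using sc t unfolding strongly_convex_def by auto
    moreover have "t * u + (1 - t) * v = v + t * (u - v)" by (simp add: algebra_simps)
    ultimately have "G t - G 0 \<le> t * (F u - F v - \<mu> / 2 * (1 - t) * (u - v)\<^sup>2)"
      unfolding G_def by (simp add: algebra_simps)
    thus "(G (0 + t) - G 0) / t \<le> F u - F v - \<mu> / 2 * (1 - t) * (u - v)\<^sup>2"
      using t by (simp add: divide_le_eq mult.commute)
  qed simp
  from tendsto_le[OF _ bound slope this] show ?thesis by simp
qed

lemma bregman_ge_quadratic:
  assumes "\<And>u v. F v + dF v * (u - v) + \<mu> / 2 * (u - v)\<^sup>2 \<le> F u"
  shows "\<mu> / 2 * (u - v)\<^sup>2 \<le> bregman F dF u v"
  using assms[of v u] unfolding bregman_def by linarith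

lemma mirror_descent_step:
  fixes F dF :: "real \<Rightarrow> real"
  assumes lower: "\<And>u v. F v + dF v * (u - v) + \<mu> / 2 * (u - v)\<^sup>2 \<le> F u"
    and mu: "0 < \<mu>" and eta: "0 < \<eta>"
    and update: "dF r' = dF r - \<eta> * g"
  shows "g * (r - q) \<le> (bregman F dF q r - bregman F dF q r') / \<eta> + \<eta> * g\<^sup>2 / (2 * \<mu>)"
proof -
  have three_point: "\<eta> * g * (r - q) = bregman F dF q r - bregman F dF q r' + bregman F dF r r'"
    unfolding bregman_def update by (simp add: algebra_simps)
  have "bregman F dF r r' = \<eta> * g * (r - r') - bregman F dF r' r"
    unfolding bregman_def update by (simp add: algebra_simps)
  also have "\<dots> \<le> \<eta> * g * (r - r') - \<mu> / 2 * (r - r')\<^sup>2"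
    using bregman_ge_quadratic[OF lower, of r' r] by (simp add: power2_commute)
  also have "\<dots> \<le> \<eta>\<^sup>2 * g\<^sup>2 / (2 * \<mu>)"
  proof -
    \<comment> \<open>completing the square\<close>
    have "0 \<le> (\<mu> * (r - r') - \<eta> * g)\<^sup>2" by simp
    hence "2 * \<mu> * (\<eta> * g * (r - r') - \<mu> / 2 * (r - r')\<^sup>2) \<le> \<eta>\<^sup>2 * g\<^sup>2"
      by (simp add: power2_eq_square algebra_simps)
    thus ?thesis using mu by (simp add: le_divide_eq mult.commute)
  qed
  also have "\<dots> = \<eta> * (\<eta> * g\<^sup>2 / (2 * \<mu>))"
    by (simp add: power2_eq_square)
  finally have "\<eta> * (g * (r - q))
      \<le> \<eta> * ((bregman F dF q r - bregman F dF q r') / \<eta> + \<eta> * g\<^sup>2 / (2 * \<mu>))"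
    using three_point eta by (simp add: distrib_left)
  thus ?thesis using eta by simp
qed

lemma qloss_diff_le_subgradient:
  "qloss \<alpha> r rs - qloss \<alpha> q rs \<le> (\<alpha> - (if rs > r then 1 else 0)) * (r - q)"
  unfolding qloss_def by (auto simp: algebra_simps)

lemma weighted_qloss_mirror_descent_step:
  fixes F dF :: "real \<Rightarrow> real"
  assumes lower: "\<And>u v. F v + dF v * (u - v) + \<mu> / 2 * (u - v)\<^sup>2 \<le> F u"
    and mu: "0 < \<mu>" and eta: "0 < \<eta>" and P: "0 < P" and ob: "ob = 0 \<or> ob = 1"
    and alpha: "0 \<le> \<alpha>" "\<alpha> \<le> 1"
    and update: "dF r' = dF r - \<eta> * (\<alpha> - (if rs > r then 1 else 0)) * ob / P"
  shows "qloss \<alpha> r rs * ob / P - qloss \<alpha> q rs * ob / P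
     \<le> (bregman F dF q r - bregman F dF q r') / \<eta> + \<eta> / (2 * \<mu> * P) * ob / P"
proof -
  define g where "g = (\<alpha> - (if rs > r then 1 else 0)) * ob / P"
  have "qloss \<alpha> r rs * ob / P - qloss \<alpha> q rs * ob / P = ob / P * (qloss \<alpha> r rs - qloss \<alpha> q rs)"
    by (simp add: algebra_simps)
  also have "\<dots> \<le> ob / P * ((\<alpha> - (if rs > r then 1 else 0)) * (r - q))"
    by (rule mult_left_mono[OF qloss_diff_le_subgradient]) (use ob P in auto)
  also have "\<dots> = g * (r - q)"
    by (simp add: g_def)
  also have "\<dots> \<le> (bregman F dF q r - bregman F dF q r') / \<eta> + \<eta> * g\<^sup>2 / (2 * \<mu>)"
    by (rule mirror_descent_step[OF lower mu eta]) (simp add: update g_def)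
  also have "\<eta> * g\<^sup>2 / (2 * \<mu>) \<le> \<eta> / (2 * \<mu> * P) * ob / P"
  proof -
    have "(\<alpha> - (if rs > r then 1 else 0))\<^sup>2 \<le> (1::real)"
      using alpha by (auto simp: abs_square_le_1)
    hence "g\<^sup>2 \<le> ob / P\<^sup>2"
      using ob P unfolding g_def by (auto simp: power_divide intro: divide_right_mono)
    thus ?thesis
      using eta mu P by (auto simp: field_simps power2_eq_square intro: mult_left_mono)
  qed
  finally show ?thesis by simp
qed

lemma telescoping_bound_decreasing_steps:
  fixes a \<eta> :: "nat \<Rightarrow> real"
  assumes eta_pos: "\<And>t. 1 \<le> t \<Longrightarrow> 0 < \<eta> t"
    and eta_mono: "\<And>s t. 1 \<le> s \<Longrightarrow> s \<le> t \<Longrightarrow> \<eta> t \<le> \<eta> s"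
    and T: "1 \<le> T" and a_le: "\<And>t. t \<in> {1..T} \<Longrightarrow> a t \<le> D"
  shows "(\<Sum>t=1..T. (a t - a (Suc t)) / \<eta> t) \<le> (D - a (Suc T)) / \<eta> T"
  using T a_le
proof (induction T rule: nat_induct_at_least)
  case base
  then show ?case using eta_pos[of 1] by (auto intro: divide_right_mono)
next
  case (Suc n)
  have step: "0 < \<eta> (Suc n)" "\<eta> (Suc n) \<le> \<eta> n" "a (Suc n) \<le> D"
    using Suc eta_pos eta_mono by auto
  have "(\<Sum>t=1..Suc n. (a t - a (Suc t)) / \<eta> t)
      \<le> (D - a (Suc n)) / \<eta> n + (a (Suc n) - a (Suc (Suc n))) / \<eta> (Suc n)"
    using Suc by simp
  also have "(D - a (Suc n)) / \<eta> n \<le> (D - a (Suc n)) / \<eta> (Suc n)"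
    using step by (intro divide_left_mono) auto
  finally show ?case by (simp add: diff_divide_distrib)
qed

lemma weighted_qloss_regret_pathwise:
  fixes F dF :: "real \<Rightarrow> real" and r \<eta> p rs :: "nat \<Rightarrow> real" and obs :: "nat \<Rightarrow> bool"
  assumes lower: "\<And>u v. F v + dF v * (u - v) + \<mu> / 2 * (u - v)\<^sup>2 \<le> F u"
    and mu: "0 < \<mu>" and alpha: "0 \<le> \<alpha>" "\<alpha> \<le> 1"
    and p: "\<And>t. 1 \<le> t \<Longrightarrow> 0 < p t"
    and eta_pos: "\<And>t. 1 \<le> t \<Longrightarrow> 0 < \<eta> t"
    and eta_mono: "\<And>s t. 1 \<le> s \<Longrightarrow> s \<le> t \<Longrightarrow> \<eta> t \<le> \<eta> s"
    and T: "1 \<le> T"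
    and update: "\<And>t. 1 \<le> t \<Longrightarrow> dF (r (Suc t)) =
      dF (r t) - \<eta> t * (\<alpha> - (if rs t > r t then 1 else 0)) * (if obs t then 1 else 0) / p t"
  shows "(\<Sum>i=1..T. qloss \<alpha> (r i) (rs i) * (if obs i then 1 else 0) / p i)
    \<le> (\<Sum>i=1..T. qloss \<alpha> q (rs i) * (if obs i then 1 else 0) / p i)
      + Max ((\<lambda>t. bregman F dF q (r t)) ` {1..T}) / \<eta> T
      + (\<Sum>i=1..T. \<eta> i / (2 * \<mu> * p i) * (if obs i then 1 else 0) / p i)"
proof -
  let ?ob = "\<lambda>i. if obs i then 1 else 0 :: real"
  let ?a = "\<lambda>t. bregman F dF q (r t)"
  have "(\<Sum>i=1..T. qloss \<alpha> (r i) (rs i) * ?ob i / p i - qloss \<alpha> q (rs i) * ?ob i / p i)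
      \<le> (\<Sum>i=1..T. (?a i - ?a (Suc i)) / \<eta> i + \<eta> i / (2 * \<mu> * p i) * ?ob i / p i)"
    using p eta_pos alpha
    by (intro sum_mono weighted_qloss_mirror_descent_step[OF lower mu] update) auto
  also have "\<dots> = (\<Sum>i=1..T. (?a i - ?a (Suc i)) / \<eta> i)
      + (\<Sum>i=1..T. \<eta> i / (2 * \<mu> * p i) * ?ob i / p i)"
    by (simp add: sum.distrib)
  also have "(\<Sum>i=1..T. (?a i - ?a (Suc i)) / \<eta> i) \<le> Max (?a ` {1..T}) / \<eta> T"
  proof -
    have "(\<Sum>i=1..T. (?a i - ?a (Suc i)) / \<eta> i) \<le> (Max (?a ` {1..T}) - ?a (Suc T)) / \<eta> T"
      by (rule telescoping_bound_decreasing_steps[OF eta_pos eta_mono T]) auto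
    also have "\<dots> \<le> Max (?a ` {1..T}) / \<eta> T"
    proof -
      have "0 \<le> \<mu> / 2 * (q - r (Suc T))\<^sup>2" using mu by simp
      hence "0 \<le> ?a (Suc T)" using bregman_ge_quadratic[OF lower, of q "r (Suc T)"] by linarith
      thus ?thesis using eta_pos[OF T] by (simp add: divide_right_mono)
    qed
    finally show ?thesis .
  qed
  finally show ?thesis by (simp add: sum_subtractf)
qed

lemma imocp_update:
  assumes "surj dF" "1 \<le> t"
  shows "dF (imocp dF \<alpha> \<eta> p rs r1 obs (Suc t)) = dF (imocp dF \<alpha> \<eta> p rs r1 obs t)
    - \<eta> t * (\<alpha> - (if rs t > imocp dF \<alpha> \<eta> p rs r1 obs t then 1 else 0))
      * (if obs t then 1 else 0) / p t"
proof -
  obtain n where "t = Suc n" using assms(2) by (cases t) auto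
  thus ?thesis by (simp add: Let_def surj_f_inv_f[OF assms(1)])
qed

lemma finite_set_Pi_pmf_bernoulli:
  "finite A \<Longrightarrow> finite (set_pmf (Pi_pmf A False (\<lambda>t. bernoulli_pmf (p t))))"
  by (simp add: set_Pi_pmf finite_PiE_dflt)

lemma expectation_Pi_bernoulli_importance_weighted:
  fixes c p :: "nat \<Rightarrow> real"
  assumes A: "finite A" and p: "\<And>i. i \<in> A \<Longrightarrow> 0 < p i \<and> p i \<le> 1"
  shows "measure_pmf.expectation (Pi_pmf A False (\<lambda>t. bernoulli_pmf (p t)))
           (\<lambda>obs. \<Sum>i\<in>A. c i * (if obs i then 1 else 0) / p i) = (\<Sum>i\<in>A. c i)"
proof -
  let ?M = "Pi_pmf A False (\<lambda>t. bernoulli_pmf (p t))"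
  have coordinate: "measure_pmf.expectation ?M (\<lambda>obs. c i * (if obs i then 1 else 0) / p i)
      = c i" if i: "i \<in> A" for i
  proof -
    have "measure_pmf.expectation ?M (\<lambda>obs. c i * (if obs i then 1 else 0) / p i)
        = measure_pmf.expectation (map_pmf (\<lambda>f. f i) ?M) (\<lambda>b. c i * (if b then 1 else 0) / p i)"
      by simp
    also have "\<dots> = measure_pmf.expectation (bernoulli_pmf (p i)) (\<lambda>b. c i * (if b then 1 else 0) / p i)"
      using A i by (simp add: Pi_pmf_component)
    finally show ?thesis using p[OF i] by simp
  qed
  have "measure_pmf.expectation ?M (\<lambda>obs. \<Sum>i\<in>A. c i * (if obs i then 1 else 0) / p i)
      = (\<Sum>i\<in>A. measure_pmf.expectation ?M (\<lambda>obs. c i * (if obs i then 1 else 0) / p i))"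
    by (intro Bochner_Integration.integral_sum integrable_measure_pmf_finite
        finite_set_Pi_pmf_bernoulli A)
  also have "\<dots> = (\<Sum>i\<in>A. c i)"
    by (rule sum.cong[OF refl coordinate])
  finally show ?thesis .
qed

theorem theorem2:
  fixes \<alpha> B \<sigma> \<mu> r1 :: real and rs \<eta> p :: "nat \<Rightarrow> real"
    and f dR :: "real \<Rightarrow> real" and T :: nat and q :: real
  assumes alpha: "0 < \<alpha>" "\<alpha> < 1"
    and B: "0 < B"
    and rs: "\<And>t. 1 \<le> t \<Longrightarrow> 0 \<le> rs t \<and> rs t \<le> B"
    and f_meas: "f \<in> borel_measurable borel"
    and f_nonneg: "\<And>x. 0 \<le> f x"
    and f_bdd: "\<exists>K. \<forall>x. f x \<le> K"
    and f_supp: "\<And>x. x \<notin> {0..B} \<Longrightarrow> f x = 0"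
    and f_prob: "integrable lborel f" "(\<integral>x. f x \<partial>lborel) = 1"
    and sigma: "0 < \<sigma>"
    and dR: "\<And>x. (Rreg \<alpha> \<sigma> f has_real_derivative dR x) (at x)"
    and dR_props: "continuous_on UNIV dR" "strict_mono dR" "bij dR"
    and mu: "0 < \<mu>" "strongly_convex \<mu> (Rreg \<alpha> \<sigma> f)"
    and p: "\<And>t. 1 \<le> t \<Longrightarrow> 0 < p t \<and> p t \<le> 1"
    and r1: "0 \<le> r1" "r1 \<le> B"
    and eta_pos: "\<And>t. 1 \<le> t \<Longrightarrow> 0 < \<eta> t"
    and eta_mono: "\<And>s t. 1 \<le> s \<Longrightarrow> s \<le> t \<Longrightarrow> \<eta> t \<le> \<eta> s"
    and T: "1 \<le> T"
    and q: "\<And>u. (\<Sum>i=1..T. qloss \<alpha> q (rs i)) \<le> (\<Sum>i=1..T. qloss \<alpha> u (rs i))"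
  shows
    "measure_pmf.expectation (Pi_pmf {1..T} False (\<lambda>t. bernoulli_pmf (p t)))
        (\<lambda>obs. \<Sum>i=1..T. qloss \<alpha> (imocp dR \<alpha> \<eta> p rs r1 obs i) (rs i)
                          * (if obs i then 1 else 0) / p i)
      - (INF u. \<Sum>i=1..T. qloss \<alpha> u (rs i))
     \<le> measure_pmf.expectation (Pi_pmf {1..T} False (\<lambda>t. bernoulli_pmf (p t)))
          (\<lambda>obs. Max ((\<lambda>t. bregman (Rreg \<alpha> \<sigma> f) dR q (imocp dR \<alpha> \<eta> p rs r1 obs t)) ` {1..T}))
        / \<eta> T
      + 1 / (2 * \<mu> * Min (p ` {1..T})) * (\<Sum>i=1..T. \<eta> i)"
proof -
  let ?M = "Pi_pmf {1..T} False (\<lambda>t. bernoulli_pmf (p t))"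
  let ?r = "imocp dR \<alpha> \<eta> p rs r1"
  let ?ob = "\<lambda>obs i. if obs i then 1 else 0 :: real"
  let ?D = "\<lambda>obs. Max ((\<lambda>t. bregman (Rreg \<alpha> \<sigma> f) dR q (?r obs t)) ` {1..T})"
  have int: "integrable ?M g" for g :: "(nat \<Rightarrow> bool) \<Rightarrow> real"
    by (simp add: integrable_measure_pmf_finite finite_set_Pi_pmf_bernoulli)
  have p_range: "\<And>i. i \<in> {1..T} \<Longrightarrow> 0 < p i \<and> p i \<le> 1" using p by auto
  note E_weighted = expectation_Pi_bernoulli_importance_weighted[OF finite_atLeastAtMost p_range]
  have pathwise: "(\<Sum>i=1..T. qloss \<alpha> (?r obs i) (rs i) * ?ob obs i / p i)
    \<le> (\<Sum>i=1..T. qloss \<alpha> q (rs i) * ?ob obs i / p i) + ?D obs / \<eta> T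
      + (\<Sum>i=1..T. \<eta> i / (2 * \<mu> * p i) * ?ob obs i / p i)" (is "?X obs \<le> ?Y obs") for obs
    using alpha p by (intro weighted_qloss_regret_pathwise[OF strongly_convex_first_order[OF mu(2) dR]
        mu(1) _ _ _ eta_pos eta_mono T] imocp_update[OF bij_is_surj[OF dR_props(3)]]) auto
  have "measure_pmf.expectation ?M ?X \<le> measure_pmf.expectation ?M ?Y"
    by (rule integral_mono[OF int int pathwise])
  also have "\<dots> = (\<Sum>i=1..T. qloss \<alpha> q (rs i)) + measure_pmf.expectation ?M ?D / \<eta> T
      + (\<Sum>i=1..T. \<eta> i / (2 * \<mu> * p i))"
    by (simp only: Bochner_Integration.integral_add[OF int int] integral_divide_zero E_weighted)
  finally have "measure_pmf.expectation ?M ?X \<le> (\<Sum>i=1..T. qloss \<alpha> q (rs i))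
      + measure_pmf.expectation ?M ?D / \<eta> T + (\<Sum>i=1..T. \<eta> i / (2 * \<mu> * p i))" .
  moreover have "(\<Sum>i=1..T. \<eta> i / (2 * \<mu> * p i)) \<le> 1 / (2 * \<mu> * Min (p ` {1..T})) * (\<Sum>i=1..T. \<eta> i)"
    unfolding sum_distrib_left
    using p eta_pos mu(1) T by (intro sum_mono) (auto simp: Min_gr_iff less_imp_le intro!: frac_le)
  moreover have "(INF u. \<Sum>i=1..T. qloss \<alpha> u (rs i)) = (\<Sum>i=1..T. qloss \<alpha> q (rs i))"
    by (rule cInf_eq_minimum) (use q in auto)
  ultimately show ?thesis by linarith
qed

end
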